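(* For every $n\ge2$: - the total number of pairs $(T,\ell)$ with $T$ a binary tree on $n$ vertices and $\ell$ a leaf of $T$ is $\binom{2n-2}{n-1}$; - the total, over these pairs, of the distance from the root to $\ell$ is $4^{n-1}-\binom{2n-2}{n-1}$. Hence the expected root-to-leaf distance is $$\frac{(2n-2)!!}{(2n-3)!!}-1=\sqrt{\pi n}-1+O\Bigl(\frac1{\sqrt n}\Bigr).$$
   Context: Binary trees are rooted trees in which every vertex has at most one left child and at most one right child, so a single child is designated left or right. The size is the number of vertices, and a leaf is a vertex with no children. The double factorials are $(2m)!!=2\cdot4\cdots(2m)$ and $(2m-1)!!=1\cdot3\cdots(2m-1)$. *)

theory Defs
  imports Complex_Main "HOL-Library.Landau_Symbols"
begin

text \<open>Binary trees: every vertex has an optional left and an optional right child.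
  BEmpty is the empty (absent) subtree; BNode l r is a vertex with left subtree l
  and right subtree r.\<close>
datatype btree = BEmpty | BNode btree btree

fun nverts :: "btree \<Rightarrow> nat" where
  "nverts BEmpty = 0"
| "nverts (BNode l r) = Suc (nverts l + nverts r)"

definition trees :: "nat \<Rightarrow> btree set" where
  "trees n = {t. nverts t = n}"

text \<open>Vertices are identified by their path from the root (False = go left,
  True = go right); the distance from the root is the length of the path.\<close>
fun leaves :: "btree \<Rightarrow> bool list set" where
  "leaves BEmpty = {}"
| "leaves (BNode l r) =
     (if l = BEmpty \<and> r = BEmpty then {[]}
      else Cons False ` leaves l \<union> Cons True ` leaves r)"

definition tree_leaf_pairs :: "nat \<Rightarrow> (btree \<times> bool list) set" where
  "tree_leaf_pairs n = {(t, p). t \<in> trees n \<and> p \<in> leaves t}"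

definition total_leaf_depth :: "nat \<Rightarrow> nat" where
  "total_leaf_depth n = (\<Sum>(t, p)\<in>tree_leaf_pairs n. length p)"

definition expected_leaf_depth :: "nat \<Rightarrow> real" where
  "expected_leaf_depth n = real (total_leaf_depth n) / real (card (tree_leaf_pairs n))"

text \<open>Double factorials (2m)!! and (2m-1)!!.\<close>
definition even_dfact :: "nat \<Rightarrow> nat" where
  "even_dfact m = (\<Prod>i=1..m. 2 * i)"

definition odd_dfact :: "nat \<Rightarrow> nat" where
  "odd_dfact m = (\<Prod>i=1..m. 2 * i - 1)"

end

theory Submission
  imports Defs "HOL-Computational_Algebra.Formal_Power_Series" "HOL-Analysis.Gamma_Function"
begin

text \<open>
  Splitting a binary tree at its root into its two subtrees gives equations for the generating
  functions \<open>C\<close> of trees, \<open>A\<close> of pairs (tree, leaf) and \<open>D\<close> of total leaf depths: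
  \<open>C = 1 + X C\<^sup>2\<close>, \<open>A = X (1 + 2 A C)\<close> and \<open>D = 2 X (D + A) C\<close>.
  The series \<open>S = 1 - 2 X C\<close> satisfies \<open>S\<^sup>2 = 1 - 4 X\<close>, so it is \<open>\<surd>(1 - 4 X)\<close>, whose inverse
  is the generating function \<open>B\<close> of the central binomial coefficients. Hence \<open>A = X B\<close> and
  \<open>D = (A - X) / S = X (1 / (1 - 4 X) - B)\<close>, which are the two counting formulas.
  The expected depth is then \<open>4\<^sup>m / (2m choose m) - 1\<close> with \<open>m = n - 1\<close>; this ratio equals
  \<open>(2m)!! / (2m-1)!!\<close>, and the monotone sequences behind Wallis' product squeeze its square
  between \<open>\<pi> m\<close> and \<open>\<pi> (m + 1/2)\<close>.
\<close>

unbundle fps_syntax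

section \<open>Recurrences for trees and their leaves\<close>

lemma trees_0: "trees 0 = {BEmpty}"
  unfolding trees_def by (auto elim: nverts.elims)

lemma trees_Suc:
  "trees (Suc n) = (\<lambda>(i, l, r). BNode l r) ` (SIGMA i:{..n}. trees i \<times> trees (n - i))"
proof (intro equalityI subsetI)
  fix t assume "t \<in> trees (Suc n)"
  then obtain l r where "t = BNode l r" and "nverts l + nverts r = n"
    unfolding trees_def by (cases t) auto
  then show "t \<in> (\<lambda>(i, l, r). BNode l r) ` (SIGMA i:{..n}. trees i \<times> trees (n - i))"
    unfolding trees_def by (intro image_eqI[where x = "(nverts l, l, r)"]) auto
qed (auto simp: trees_def)

lemma finite_trees: "finite (trees n)"
proof (induction n rule: less_induct)
  case (less n)
  then show ?case
    by (cases n) (auto simp: trees_0 trees_Suc intro!: finite_imageI finite_SigmaI)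
qed

lemma sum_trees_Suc:
  "(\<Sum>t\<in>trees (Suc n). f t) = (\<Sum>i\<le>n. \<Sum>l\<in>trees i. \<Sum>r\<in>trees (n - i). f (BNode l r))"
proof -
  have "inj_on (\<lambda>(i, l, r). BNode l r) (SIGMA i:{..n}. trees i \<times> trees (n - i))"
    by (auto simp: inj_on_def trees_def)
  then have "(\<Sum>t\<in>trees (Suc n). f t)
      = (\<Sum>(i, l, r)\<in>(SIGMA i:{..n}. trees i \<times> trees (n - i)). f (BNode l r))"
    unfolding trees_Suc by (subst sum.reindex) (simp_all add: case_prod_unfold)
  also have "\<dots> = (\<Sum>i\<le>n. \<Sum>(l, r)\<in>trees i \<times> trees (n - i). f (BNode l r))"
    by (subst sum.Sigma) (simp_all add: finite_trees)
  also have "\<dots> = (\<Sum>i\<le>n. \<Sum>l\<in>trees i. \<Sum>r\<in>trees (n - i). f (BNode l r))"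
    by (simp add: sum.cartesian_product)
  finally show ?thesis .
qed

lemma finite_leaves: "finite (leaves t)"
  by (induction t) auto

definition leaf_depth_sum :: "btree \<Rightarrow> nat" where
  "leaf_depth_sum t = (\<Sum>p\<in>leaves t. length p)"

lemma sum_Cons_image_Un:
  assumes "finite A" "finite B"
  shows "(\<Sum>p\<in>Cons False ` A \<union> Cons True ` B. f p)
           = (\<Sum>p\<in>A. f (False # p)) + (\<Sum>p\<in>B. f (True # p))"
  using assms by (subst sum.union_disjoint) (auto simp: sum.reindex)

lemma card_leaves_BNode:
  "card (leaves (BNode l r))
     = (if l = BEmpty \<and> r = BEmpty then 1 else card (leaves l) + card (leaves r))"
  using sum_Cons_image_Un[OF finite_leaves finite_leaves, of "\<lambda>_. 1 :: nat" l r] by simp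

lemma leaf_depth_sum_BNode:
  "leaf_depth_sum (BNode l r)
     = leaf_depth_sum l + card (leaves l) + leaf_depth_sum r + card (leaves r)"
  by (simp add: leaf_depth_sum_def sum_Cons_image_Un finite_leaves sum_Suc)

lemma tree_leaf_pairs_eq_Sigma: "tree_leaf_pairs n = Sigma (trees n) leaves"
  unfolding tree_leaf_pairs_def by auto

lemma tree_leaf_pairs_0: "tree_leaf_pairs 0 = {}"
  by (simp add: tree_leaf_pairs_def trees_0)

lemma card_tree_leaf_pairs: "card (tree_leaf_pairs n) = (\<Sum>t\<in>trees n. card (leaves t))"
  by (simp add: tree_leaf_pairs_eq_Sigma finite_trees finite_leaves)

lemma total_leaf_depth_eq: "total_leaf_depth n = (\<Sum>t\<in>trees n. leaf_depth_sum t)"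
  unfolding total_leaf_depth_def leaf_depth_sum_def tree_leaf_pairs_eq_Sigma
  by (simp add: sum.Sigma finite_trees finite_leaves)

lemma total_leaf_depth_0: "total_leaf_depth 0 = 0"
  by (simp add: total_leaf_depth_def tree_leaf_pairs_0)

lemma card_trees_Suc: "card (trees (Suc n)) = (\<Sum>i\<le>n. card (trees i) * card (trees (n - i)))"
  using sum_trees_Suc[of "\<lambda>_. 1 :: nat" n] by simp

lemma sum_sum_add_eq:
  fixes f g :: "'a \<Rightarrow> nat"
  assumes "finite A" "finite B"
  shows "(\<Sum>x\<in>A. \<Sum>y\<in>B. f x + g y) = card B * sum f A + card A * sum g B"
  using assms by (simp add: sum.distrib flip: sum_distrib_left)

lemma card_tree_leaf_pairs_Suc:
  "card (tree_leaf_pairs (Suc n)) = (if n = 0 then 1 else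
     \<Sum>i\<le>n. card (tree_leaf_pairs i) * card (trees (n - i))
            + card (trees i) * card (tree_leaf_pairs (n - i)))"
proof (cases "n = 0")
  case True
  then show ?thesis
    by (simp add: card_tree_leaf_pairs sum_trees_Suc trees_0)
next
  case False
  have "card (leaves (BNode l r)) = card (leaves l) + card (leaves r)"
    if "l \<in> trees i" "r \<in> trees (n - i)" "i \<le> n" for l r i
    using False that by (auto simp: card_leaves_BNode trees_def simp del: leaves.simps)
  then have "card (tree_leaf_pairs (Suc n))
      = (\<Sum>i\<le>n. \<Sum>l\<in>trees i. \<Sum>r\<in>trees (n - i). card (leaves l) + card (leaves r))"
    unfolding card_tree_leaf_pairs sum_trees_Suc by (intro sum.cong refl) auto
  also have "\<dots> = (\<Sum>i\<le>n. card (tree_leaf_pairs i) * card (trees (n - i))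
                             + card (trees i) * card (tree_leaf_pairs (n - i)))"
    by (intro sum.cong refl) (simp add: sum_sum_add_eq finite_trees card_tree_leaf_pairs mult.commute)
  finally show ?thesis
    using False by simp
qed

lemma total_leaf_depth_Suc:
  "total_leaf_depth (Suc n) =
     (\<Sum>i\<le>n. (total_leaf_depth i + card (tree_leaf_pairs i)) * card (trees (n - i))
            + card (trees i) * (total_leaf_depth (n - i) + card (tree_leaf_pairs (n - i))))"
  unfolding total_leaf_depth_eq card_tree_leaf_pairs sum_trees_Suc
proof (intro sum.cong refl)
  fix i
  have "(\<Sum>l\<in>trees i. \<Sum>r\<in>trees (n - i). leaf_depth_sum (BNode l r))
      = (\<Sum>l\<in>trees i. \<Sum>r\<in>trees (n - i).
           (leaf_depth_sum l + card (leaves l)) + (leaf_depth_sum r + card (leaves r)))"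
    by (simp only: leaf_depth_sum_BNode add.assoc)
  also have "\<dots> = card (trees (n - i)) * (\<Sum>t\<in>trees i. leaf_depth_sum t + card (leaves t))
      + card (trees i) * (\<Sum>t\<in>trees (n - i). leaf_depth_sum t + card (leaves t))"
    by (rule sum_sum_add_eq) (simp_all add: finite_trees)
  finally show "(\<Sum>l\<in>trees i. \<Sum>r\<in>trees (n - i). leaf_depth_sum (BNode l r))
      = ((\<Sum>t\<in>trees i. leaf_depth_sum t) + (\<Sum>t\<in>trees i. card (leaves t))) * card (trees (n - i))
        + card (trees i) * ((\<Sum>t\<in>trees (n - i). leaf_depth_sum t)
                            + (\<Sum>t\<in>trees (n - i). card (leaves t)))"
    by (simp add: sum.distrib mult.commute)
qed

section \<open>Generating functions\<close>

definition tree_gf :: "real fps" where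
  "tree_gf = Abs_fps (\<lambda>n. real (card (trees n)))"

definition leaf_gf :: "real fps" where
  "leaf_gf = Abs_fps (\<lambda>n. real (card (tree_leaf_pairs n)))"

definition depth_gf :: "real fps" where
  "depth_gf = Abs_fps (\<lambda>n. real (total_leaf_depth n))"

lemma fps_X_mult_eqI:
  fixes f g :: "'a::{comm_monoid_add,mult_zero,monoid_mult} fps"
  assumes "f $ 0 = 0" "\<And>n. f $ Suc n = g $ n"
  shows "f = fps_X * g"
  using assms by (intro fps_ext) (auto simp: gr0_conv_Suc)

lemma tree_gf_eq: "tree_gf = 1 + fps_X * tree_gf ^ 2"
proof -
  have "tree_gf - 1 = fps_X * tree_gf ^ 2"
    by (rule fps_X_mult_eqI)
      (simp_all add: tree_gf_def trees_0 card_trees_Suc power2_eq_square fps_mult_nth atLeast0AtMost)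
  then show ?thesis by (simp add: algebra_simps)
qed

lemma leaf_gf_eq: "leaf_gf = fps_X * (1 + leaf_gf * tree_gf + tree_gf * leaf_gf)"
  by (rule fps_X_mult_eqI) (unfold fps_add_nth fps_mult_nth,
      simp_all add: leaf_gf_def tree_gf_def card_tree_leaf_pairs_Suc tree_leaf_pairs_0
      atLeast0AtMost sum.distrib)

lemma depth_gf_eq:
  "depth_gf = fps_X * ((depth_gf + leaf_gf) * tree_gf + tree_gf * (depth_gf + leaf_gf))"
  by (rule fps_X_mult_eqI) (unfold fps_add_nth fps_mult_nth,
      simp_all add: depth_gf_def leaf_gf_def tree_gf_def total_leaf_depth_Suc total_leaf_depth_0
      atLeast0AtMost sum.distrib)

definition central_binomial_gf :: "real fps" where
  "central_binomial_gf = Abs_fps (\<lambda>n. real ((2 * n) choose n))"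

definition geometric_gf :: "real fps" where
  "geometric_gf = Abs_fps (\<lambda>n. 4 ^ n)"

lemma geometric_gf_mult: "(1 - 4 * fps_X) * geometric_gf = 1"
proof (rule fps_ext)
  fix n show "((1 - 4 * fps_X) * geometric_gf) $ n = 1 $ n"
    by (cases n) (simp_all add: geometric_gf_def numeral_fps_const algebra_simps)
qed

lemma Suc_mult_central_binomial:
  "Suc n * ((2 * Suc n) choose Suc n) = (4 * n + 2) * ((2 * n) choose n)"
proof -
  have "Suc n * (Suc (Suc (2 * n)) choose Suc n) = Suc (Suc (2 * n)) * (Suc (2 * n) choose n)"
    by (rule Suc_times_binomial)
  then have A: "Suc n * ((2 * Suc n) choose Suc n) = 2 * (Suc n * (Suc (2 * n) choose n))"
    by simp
  have "(Suc (2 * n) - n) * (Suc (2 * n) choose n) = Suc (2 * n) * ((2 * n) choose n)"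
    using binomial_absorb_comp[of "Suc (2 * n)" n] by simp
  then have B: "Suc n * (Suc (2 * n) choose n) = Suc (2 * n) * ((2 * n) choose n)"
    by (simp add: Suc_diff_le)
  show ?thesis
    unfolding A B by simp
qed

lemma fps_deriv_Abs_fps_recurrence:
  fixes b :: "nat \<Rightarrow> real"
  assumes "\<And>n. real (Suc n) * b (Suc n) = (4 * real n + 2) * b n"
  shows "(1 - 4 * fps_X) * fps_deriv (Abs_fps b) = 2 * Abs_fps b"
proof (rule fps_ext)
  fix n show "((1 - 4 * fps_X) * fps_deriv (Abs_fps b)) $ n = (2 * Abs_fps b) $ n"
    using assms[of n] by (cases n) (simp_all add: numeral_fps_const algebra_simps)
qed

lemma central_binomial_gf_deriv:
  "(1 - 4 * fps_X) * fps_deriv central_binomial_gf = 2 * central_binomial_gf"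
  unfolding central_binomial_gf_def
  by (rule fps_deriv_Abs_fps_recurrence)
    (simp only: Suc_mult_central_binomial flip: of_nat_mult, simp add: algebra_simps)

lemma central_binomial_gf_mult_sqrt:
  fixes S :: "real fps"
  assumes sq: "S ^ 2 = 1 - 4 * fps_X" and S0: "S $ 0 = 1"
  shows "central_binomial_gf * S = 1"
proof -
  let ?B = central_binomial_gf
  have "2 * (S * fps_deriv S) = fps_deriv (S ^ 2)"
    by (simp add: power2_eq_square algebra_simps)
  also have "\<dots> = 2 * (- 2)"
    by (simp add: sq numeral_fps_const)
  finally have SS': "S * fps_deriv S = - 2"
    by (metis mult_left_cancel numeral_neq_fps_zero)
  have "S \<noteq> 0"
    using S0 by auto
  \<comment> \<open>\<open>(B S)' S = B' (1 - 4 X) + B S S' = 2 B - 2 B\<close>\<close>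
  have "fps_deriv (?B * S) * S = fps_deriv ?B * S ^ 2 + ?B * (S * fps_deriv S)"
    by (simp add: power2_eq_square algebra_simps)
  also have "\<dots> = 0"
    using central_binomial_gf_deriv by (simp add: sq SS' algebra_simps)
  finally have "fps_deriv (?B * S) = 0"
    using \<open>S \<noteq> 0\<close> by simp
  then have "?B * S = fps_const ((?B * S) $ 0)"
    by (rule fps_deriv_eq_0_iff[THEN iffD1])
  then show ?thesis
    using S0 by (simp add: central_binomial_gf_def)
qed

definition sqrt_gf :: "real fps" where
  "sqrt_gf = 1 - 2 * fps_X * tree_gf"

lemma sqrt_gf_nth_0: "sqrt_gf $ 0 = 1"
  by (simp add: sqrt_gf_def)

lemma sqrt_gf_squared: "sqrt_gf ^ 2 = 1 - 4 * fps_X"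
proof -
  have "sqrt_gf ^ 2 = 1 - 4 * fps_X * (tree_gf - fps_X * tree_gf ^ 2)"
    by (simp add: sqrt_gf_def power2_eq_square algebra_simps)
  also have "tree_gf - fps_X * tree_gf ^ 2 = 1"
    using tree_gf_eq by (simp add: algebra_simps)
  finally show ?thesis by simp
qed

lemma leaf_gf_mult_sqrt_gf: "leaf_gf * sqrt_gf = fps_X"
  using leaf_gf_eq by (simp add: sqrt_gf_def algebra_simps)

lemma central_binomial_gf_mult_sqrt_gf: "central_binomial_gf * sqrt_gf = 1"
  by (rule central_binomial_gf_mult_sqrt[OF sqrt_gf_squared sqrt_gf_nth_0])

lemma sqrt_gf_nonzero: "sqrt_gf \<noteq> 0"
  using sqrt_gf_nth_0 by (metis fps_zero_nth zero_neq_one)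

lemma leaf_gf_closed: "leaf_gf = fps_X * central_binomial_gf"
proof -
  have "leaf_gf = leaf_gf * (central_binomial_gf * sqrt_gf)"
    by (simp add: central_binomial_gf_mult_sqrt_gf)
  also have "\<dots> = (leaf_gf * sqrt_gf) * central_binomial_gf"
    by (simp only: mult_ac)
  also have "\<dots> = fps_X * central_binomial_gf"
    by (simp only: leaf_gf_mult_sqrt_gf)
  finally show ?thesis .
qed

lemma depth_gf_mult_sqrt_gf: "depth_gf * sqrt_gf = leaf_gf - fps_X"
proof -
  have "depth_gf * sqrt_gf = depth_gf - fps_X * (depth_gf * tree_gf + tree_gf * depth_gf)"
    by (simp add: sqrt_gf_def algebra_simps)
  also have "\<dots> = fps_X * (leaf_gf * tree_gf + tree_gf * leaf_gf)"
  proof -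
    from depth_gf_eq have "depth_gf = fps_X * (depth_gf * tree_gf + tree_gf * depth_gf)
        + fps_X * (leaf_gf * tree_gf + tree_gf * leaf_gf)"
      by (simp add: algebra_simps)
    then show ?thesis by (metis add_diff_cancel_left')
  qed
  also have "\<dots> = leaf_gf - fps_X"
  proof -
    from leaf_gf_eq have "leaf_gf = fps_X + fps_X * (leaf_gf * tree_gf + tree_gf * leaf_gf)"
      by (simp add: algebra_simps)
    then show ?thesis by (metis add_diff_cancel_left')
  qed
  finally show ?thesis .
qed

lemma geometric_gf_mult_sqrt_gf: "geometric_gf * sqrt_gf = central_binomial_gf"
proof -
  have "sqrt_gf * (geometric_gf * sqrt_gf) = (1 - 4 * fps_X) * geometric_gf"
    using sqrt_gf_squared by (simp add: power2_eq_square mult_ac)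
  also have "\<dots> = sqrt_gf * central_binomial_gf"
    unfolding geometric_gf_mult mult.commute[of sqrt_gf central_binomial_gf]
      central_binomial_gf_mult_sqrt_gf ..
  finally show ?thesis
    using sqrt_gf_nonzero by simp
qed

lemma depth_gf_closed: "depth_gf = fps_X * (geometric_gf - central_binomial_gf)"
proof -
  have "depth_gf * sqrt_gf = fps_X * (central_binomial_gf - 1)"
    by (simp add: depth_gf_mult_sqrt_gf leaf_gf_closed algebra_simps)
  also have "\<dots> = fps_X * (geometric_gf - central_binomial_gf) * sqrt_gf"
    by (simp add: geometric_gf_mult_sqrt_gf central_binomial_gf_mult_sqrt_gf algebra_simps)
  finally show ?thesis
    using sqrt_gf_nonzero by simp
qed

lemma card_tree_leaf_pairs_Suc_closed: "card (tree_leaf_pairs (Suc n)) = (2 * n) choose n"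
proof -
  have "leaf_gf $ Suc n = (fps_X * central_binomial_gf) $ Suc n"
    by (simp only: leaf_gf_closed)
  then show ?thesis
    by (simp add: leaf_gf_def central_binomial_gf_def)
qed

lemma real_total_leaf_depth_Suc_closed:
  "real (total_leaf_depth (Suc n)) = 4 ^ n - real ((2 * n) choose n)"
proof -
  have "depth_gf $ Suc n = (fps_X * (geometric_gf - central_binomial_gf)) $ Suc n"
    by (simp only: depth_gf_closed)
  then show ?thesis
    by (simp add: depth_gf_def geometric_gf_def central_binomial_gf_def)
qed

lemma total_leaf_depth_Suc_closed: "total_leaf_depth (Suc n) = 4 ^ n - ((2 * n) choose n)"
proof -
  have "real (total_leaf_depth (Suc n) + ((2 * n) choose n)) = real (4 ^ n)"
    using real_total_leaf_depth_Suc_closed[of n] by simp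
  then show ?thesis
    by (simp only: of_nat_eq_iff)
qed

section \<open>The ratio 4^m / (2m choose m) and Wallis' product\<close>

definition central_ratio :: "nat \<Rightarrow> real" where
  "central_ratio m = 4 ^ m / real ((2 * m) choose m)"

lemma central_ratio_pos: "central_ratio m > 0"
  by (simp add: central_ratio_def)

lemma central_ratio_Suc:
  "central_ratio (Suc m) = central_ratio m * (2 * real m + 2) / (2 * real m + 1)"
proof -
  define b b' where "b = real ((2 * m) choose m)" and "b' = real ((2 * Suc m) choose Suc m)"
  have rec: "real (Suc m) * b' = (4 * real m + 2) * b"
    unfolding b_def b'_def
    by (simp only: Suc_mult_central_binomial flip: of_nat_mult) (simp add: algebra_simps)
  have "b > 0" "b' > 0"
    unfolding b_def b'_def by (simp_all only: of_nat_0_less_iff zero_less_binomial_iff) simp_all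
  have "4 ^ m * (2 * real m + 2) * b' = 2 * 4 ^ m * (real (Suc m) * b')"
    by (simp add: algebra_simps)
  also have "\<dots> = 4 ^ Suc m * (b * (2 * real m + 1))"
    by (simp only: rec) (simp add: algebra_simps)
  finally have "4 ^ Suc m / b' = 4 ^ m * (2 * real m + 2) / (b * (2 * real m + 1))"
    using \<open>b > 0\<close> \<open>b' > 0\<close> by (simp add: frac_eq_eq)
  then show ?thesis
    unfolding central_ratio_def b_def [symmetric] b'_def [symmetric] by simp
qed

lemma even_dfact_eq: "even_dfact m = 2 ^ m * fact m"
  by (induction m) (simp_all add: even_dfact_def prod.nat_ivl_Suc' algebra_simps)

lemma even_dfact_mult_odd_dfact: "even_dfact m * odd_dfact m = fact (2 * m)"
proof (induction m)
  case 0
  then show ?case by (simp add: even_dfact_def odd_dfact_def)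
next
  case (Suc m)
  have "even_dfact (Suc m) * odd_dfact (Suc m)
      = even_dfact m * odd_dfact m * ((2 * m + 1) * (2 * m + 2))"
    by (simp add: even_dfact_def odd_dfact_def prod.nat_ivl_Suc' algebra_simps)
  also have "\<dots> = fact (2 * Suc m)"
    using Suc by (simp add: algebra_simps)
  finally show ?case .
qed

lemma even_dfact_div_odd_dfact: "real (even_dfact m) / real (odd_dfact m) = central_ratio m"
proof -
  define b where "b = (2 * m) choose m"
  have "fact m * fact m * b = even_dfact m * odd_dfact m"
    using binomial_fact_lemma[of m "2 * m"] by (simp add: b_def even_dfact_mult_odd_dfact mult_2)
  then have "fact m * (fact m * b) = fact m * (2 ^ m * odd_dfact m)"
    by (simp add: even_dfact_eq mult_ac)
  then have "fact m * b = 2 ^ m * odd_dfact m"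
    by simp
  then have "even_dfact m * b = 2 ^ m * 2 ^ m * odd_dfact m"
    by (metis even_dfact_eq mult.assoc)
  then have "even_dfact m * b = 4 ^ m * odd_dfact m"
    by (simp flip: power_mult_distrib)
  then have key: "real (even_dfact m) * real b = 4 ^ m * real (odd_dfact m)"
    by (metis of_nat_mult of_nat_numeral of_nat_power)
  moreover have "real b > 0" "real (even_dfact m) > 0"
    by (simp_all add: b_def even_dfact_eq)
  ultimately have "real (odd_dfact m) > 0"
    by (metis mult_pos_pos zero_less_mult_pos zero_less_numeral zero_less_power)
  with key \<open>real b > 0\<close> show ?thesis
    unfolding central_ratio_def b_def [symmetric] by (simp add: field_simps)
qed

lemma central_ratio_sq_Suc:
  "central_ratio (Suc m) ^ 2 / (2 * real (Suc m) + 1)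
     = 4 * real (Suc m) ^ 2 / (4 * real (Suc m) ^ 2 - 1) * (central_ratio m ^ 2 / (2 * real m + 1))"
proof -
  have "4 * real (Suc m) ^ 2 - 1 = (2 * real m + 1) * (2 * real m + 3)"
    by (simp add: power2_eq_square algebra_simps)
  moreover have "2 * real m + 1 > 0" "2 * real m + 3 > 0"
    by simp_all
  ultimately show ?thesis
    by (simp add: central_ratio_Suc field_simps power2_eq_square)
qed

lemma wallis_partial_product:
  "(\<Prod>k=1..m. 4 * real k ^ 2 / (4 * real k ^ 2 - 1)) = central_ratio m ^ 2 / (2 * real m + 1)"
proof (induction m)
  case 0
  then show ?case by (simp add: central_ratio_def)
next
  case (Suc m)
  then show ?case
    by (simp only: prod.nat_ivl_Suc'[of 1 m] central_ratio_sq_Suc)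
qed

lemma central_ratio_sq_le: "central_ratio m ^ 2 \<le> pi / 2 * (2 * real m + 1)"
proof -
  define w where "w m = central_ratio m ^ 2 / (2 * real m + 1)" for m
  have "incseq w"
  proof (rule incseq_SucI)
    fix m
    define f where "f = 4 * real (Suc m) ^ 2 / (4 * real (Suc m) ^ 2 - 1)"
    have step: "w (Suc m) = f * w m"
      unfolding w_def f_def by (rule central_ratio_sq_Suc)
    have "1 \<le> 4 * y / (4 * y - 1)" if "1 \<le> y" for y :: real
      using that by (simp add: le_divide_eq)
    moreover have "1 \<le> real (Suc m) ^ 2"
      by (intro one_le_power) simp
    ultimately have "1 \<le> f"
      unfolding f_def by blast
    moreover have "0 \<le> w m"
      by (simp add: w_def)
    ultimately show "w m \<le> w (Suc m)"
      using mult_right_mono[of 1 f "w m"] step by simp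
  qed
  moreover have "w \<longlonglongrightarrow> pi / 2"
    using wallis unfolding w_def wallis_partial_product .
  ultimately have "w m \<le> pi / 2"
    by (rule incseq_le)
  then show ?thesis
    by (simp add: w_def field_simps)
qed

lemma central_ratio_sq_ge: "pi * real m \<le> central_ratio m ^ 2"
proof (cases m)
  case 0
  then show ?thesis by (simp add: central_ratio_def)
next
  case (Suc k)
  \<comment> \<open>the decreasing companion of the Wallis partial products, with the same limit\<close>
  define v where "v k = central_ratio (Suc k) ^ 2 / (2 * real k + 2)" for k
  have "decseq v"
  proof (rule decseq_SucI)
    fix k
    define a b c where "a = 2 * real (Suc k) + 2" and "b = 2 * real (Suc k) + 1"
      and "c = 2 * real k + 2"
    define f where "f = c * a / b ^ 2"
    have "a > 0" "b > 0" "c > 0"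
      by (simp_all add: a_def b_def c_def)
    then have step: "v (Suc k) = f * v k"
      unfolding v_def f_def central_ratio_Suc[of "Suc k"] a_def [symmetric] b_def [symmetric]
        c_def [symmetric]
      by (simp add: field_simps power2_eq_square)
    have "c * a \<le> b ^ 2"
      unfolding a_def b_def c_def by (simp add: power2_eq_square algebra_simps)
    then have "f \<le> 1"
      using \<open>b > 0\<close> by (simp add: f_def divide_le_eq)
    moreover have "0 \<le> v k"
      by (simp add: v_def)
    ultimately show "v (Suc k) \<le> v k"
      using mult_right_mono[of f 1 "v k"] step by simp
  qed
  moreover have "v \<longlonglongrightarrow> pi / 2"
  proof -
    have v_eq: "v = (\<lambda>k. (\<Prod>j=1..Suc k. 4 * real j ^ 2 / (4 * real j ^ 2 - 1))
                  * (1 + inverse (real (Suc k)) / 2))"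
    proof
      fix k
      have "1 + inverse (real (Suc k)) / 2 = (2 * real (Suc k) + 1) / (2 * real k + 2)"
        by (simp add: field_simps)
      moreover have "2 * real (Suc k) + 1 > 0"
        by simp
      ultimately show "v k = (\<Prod>j=1..Suc k. 4 * real j ^ 2 / (4 * real j ^ 2 - 1))
                          * (1 + inverse (real (Suc k)) / 2)"
        unfolding v_def wallis_partial_product by simp
    qed
    have "(\<lambda>k. (\<Prod>j=1..Suc k. 4 * real j ^ 2 / (4 * real j ^ 2 - 1))
        * (1 + inverse (real (Suc k)) / 2)) \<longlonglongrightarrow> pi / 2 * (1 + 0 / 2)"
      by (intro tendsto_intros wallis[THEN LIMSEQ_Suc] LIMSEQ_inverse_real_of_nat) simp
    then show ?thesis
      unfolding v_eq by simp
  qed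
  ultimately have "pi / 2 \<le> v k"
    by (rule decseq_ge)
  then show ?thesis
    by (simp add: Suc v_def field_simps)
qed

lemma abs_diff_le_of_abs_sq_diff_le:
  fixes x q c :: real
  assumes "x \<ge> 0" "q > 0" "\<bar>x\<^sup>2 - q\<^sup>2\<bar> \<le> c"
  shows "\<bar>x - q\<bar> \<le> c / q"
proof -
  have "\<bar>x - q\<bar> * q \<le> \<bar>x - q\<bar> * (x + q)"
    using assms by (intro mult_left_mono) auto
  also have "\<dots> = \<bar>(x - q) * (x + q)\<bar>"
    using assms by (simp add: abs_mult)
  also have "(x - q) * (x + q) = x\<^sup>2 - q\<^sup>2"
    by (simp add: power2_eq_square algebra_simps)
  finally show ?thesis
    using assms by (simp add: field_simps)
qed

lemma central_ratio_approx:
  "\<bar>central_ratio m - sqrt (pi * real (Suc m))\<bar> \<le> sqrt pi / sqrt (real (Suc m))"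
proof -
  define q where "q = sqrt (pi * real (Suc m))"
  have q: "q > 0" "q\<^sup>2 = pi * real (Suc m)"
    by (simp_all add: q_def)
  have "\<bar>central_ratio m ^ 2 - q\<^sup>2\<bar> \<le> pi"
    using central_ratio_sq_le[of m] central_ratio_sq_ge[of m] q(2) by (simp add: algebra_simps)
  then have "\<bar>central_ratio m - q\<bar> \<le> pi / q"
    using central_ratio_pos[of m] q(1) by (intro abs_diff_le_of_abs_sq_diff_le) simp_all
  also have "pi / q = (sqrt pi * sqrt pi) / (sqrt pi * sqrt (real (Suc m)))"
    by (simp add: q_def real_sqrt_mult)
  also have "\<dots> = sqrt pi / sqrt (real (Suc m))"
    by (rule mult_divide_mult_cancel_left) simp
  finally show ?thesis
    unfolding q_def .
qed

lemma expected_leaf_depth_Suc: "expected_leaf_depth (Suc m) = central_ratio m - 1"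
proof -
  have "real ((2 * m) choose m) > 0"
    by simp
  then show ?thesis
    unfolding expected_leaf_depth_def real_total_leaf_depth_Suc_closed
      card_tree_leaf_pairs_Suc_closed central_ratio_def by (simp add: field_simps)
qed

theorem mainTheorem16:
  shows "(\<forall>n::nat. n \<ge> 2 \<longrightarrow>
            card (tree_leaf_pairs n) = (2*n - 2) choose (n - 1)
          \<and> total_leaf_depth n = 4 ^ (n - 1) - ((2*n - 2) choose (n - 1))
          \<and> expected_leaf_depth n
              = real (even_dfact (n - 1)) / real (odd_dfact (n - 1)) - 1)
       \<and> (\<lambda>n. expected_leaf_depth n - (sqrt (pi * real n) - 1))
            \<in> O(\<lambda>n. 1 / sqrt (real n))"
proof (intro conjI allI impI)
  fix n :: nat assume "n \<ge> 2"
  then obtain m where n: "n = Suc m" "2 * n - 2 = 2 * m"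
    by (cases n) auto
  show "card (tree_leaf_pairs n) = (2*n - 2) choose (n - 1)"
    by (simp add: n card_tree_leaf_pairs_Suc_closed)
  show "total_leaf_depth n = 4 ^ (n - 1) - ((2*n - 2) choose (n - 1))"
    by (simp add: n total_leaf_depth_Suc_closed)
  show "expected_leaf_depth n = real (even_dfact (n - 1)) / real (odd_dfact (n - 1)) - 1"
    by (simp add: n expected_leaf_depth_Suc even_dfact_div_odd_dfact)
next
  have "eventually (\<lambda>n. norm (expected_leaf_depth n - (sqrt (pi * real n) - 1))
                         \<le> sqrt pi * norm (1 / sqrt (real n))) at_top"
  proof (rule eventually_at_top_linorderI[of 1])
    fix n :: nat assume "n \<ge> 1"
    then obtain m where "n = Suc m"
      by (cases n) auto
    then show "norm (expected_leaf_depth n - (sqrt (pi * real n) - 1)) \<le> sqrt pi * norm (1 / sqrt (real n))"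
      using central_ratio_approx[of m] by (simp add: expected_leaf_depth_Suc)
  qed
  then show "(\<lambda>n. expected_leaf_depth n - (sqrt (pi * real n) - 1)) \<in> O(\<lambda>n. 1 / sqrt (real n))"
    by (rule bigoI)
qed

end
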